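(* Let $m,n\ge 2$ and let $W$ be a channel from $\{1,\dots,m\}$ to $\{1,\dots,n\}$. Let $g=\max_{1\le j\le n}(\mathbf{1}W)_j$ and $\alpha_j=\min_{1\le i\le m}W_{i,j}$. Then \[ \underline{P}_W(1)=(g-m+1)_+\quad\text{and}\quad \overline{P}_W(1)=\sum_{j=1}^n\alpha_j. \]
   Context: A channel is a row-stochastic matrix; $\mathcal{D}$ is the set of deterministic (0-1) channels from $\{1,\dots,m\}$ to $\{1,\dots,n\}$, $\mathrm{rank}(D)$ the matrix rank. $\Lambda(W)=\{\lambda\text{ probability distribution on }\mathcal{D}: W=\sum_D\lambda_DD\}$. $P_\lambda(r)=\lambda(\{D:\mathrm{rank}(D)=r\})$, $\underline{P}_W(r)=\min_{\lambda\in\Lambda(W)}P_\lambda(r)$, $\overline{P}_W(r)=\max_{\lambda\in\Lambda(W)}P_\lambda(r)$. $\mathbf{1}$ is the all-one row vector of length $m$ ($\mathbf{1}W$ = column sums), and $(x)_+=\max(x,0)$. *)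

theory Defs
  imports "HOL-Analysis.Analysis"
begin

text \<open>Channels from {1..m} to {1..n} are m x n real matrices (rows indexed by type 'm,
  columns by type 'n), row-stochastic.\<close>

definition channel :: "real^'n^'m \<Rightarrow> bool" where
  "channel W \<longleftrightarrow> (\<forall>i j. W $ i $ j \<ge> 0) \<and> (\<forall>i. (\<Sum>j\<in>UNIV. W $ i $ j) = 1)"

definition det_channels :: "(real^'n^'m) set" where
  "det_channels = {D. channel D \<and> (\<forall>i j. D $ i $ j = 0 \<or> D $ i $ j = 1)}"

definition Lambda :: "real^'n^'m \<Rightarrow> ((real^'n^'m) \<Rightarrow> real) set" where
  "Lambda W = {lam. (\<forall>D. 0 \<le> lam D) \<and> (\<forall>D. D \<notin> det_channels \<longrightarrow> lam D = 0)
      \<and> (\<Sum>D\<in>det_channels. lam D) = 1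
      \<and> W = (\<Sum>D\<in>det_channels. lam D *\<^sub>R D)}"

definition P_lam :: "((real^'n^'m) \<Rightarrow> real) \<Rightarrow> nat \<Rightarrow> real" where
  "P_lam lam r = (\<Sum>D\<in>{D\<in>det_channels. rank D = r}. lam D)"

text \<open>The set of values of P_lambda(r) over lambda in Lambda(W); the lower (upper) quantity
  is its minimum (maximum).\<close>
definition P_values :: "real^'n^'m \<Rightarrow> nat \<Rightarrow> real set" where
  "P_values W r = (\<lambda>lam. P_lam lam r) ` Lambda W"

definition is_min :: "real set \<Rightarrow> real \<Rightarrow> bool" where
  "is_min S v \<longleftrightarrow> v \<in> S \<and> (\<forall>x\<in>S. v \<le> x)"

definition is_max :: "real set \<Rightarrow> real \<Rightarrow> bool" where
  "is_max S v \<longleftrightarrow> v \<in> S \<and> (\<forall>x\<in>S. x \<le> v)"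

end

theory Submission
  imports Defs
begin

(* A decomposition of W into deterministic channels is a probability weighting \<mu> of the maps
   f : 'm \<Rightarrow> 'n with W i j = \<mu>{f. f i = j}, and rank one means that f is constant.  The weight
   of the constant map to j is at most every entry of column j, which gives the upper bound; a
   non-constant map meets column j at most m - 1 times, so every column sum is at most
   (m - 1)(1 - x) + m x for x the weight of the constant maps, which gives the lower bound.
   Both bounds are attained by greedily peeling off multiples of deterministic channels that lie
   on positive entries.  For the lower bound the peeled maps must be non-constant; this stays
   possible as long as every column sum is at most m - 1 times the common row sum, an invariant
   the peeling keeps by never letting a tight column become slack. *)

section \<open>Mixtures of deterministic maps\<close>

definition mixture :: "(('m \<Rightarrow> 'n) \<Rightarrow> real) \<Rightarrow> 'm \<Rightarrow> 'n \<Rightarrow> real" where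
  "mixture \<mu> i j = (\<Sum>f | f i = j. \<mu> f)"

lemma mixture_eq_sum:
  fixes \<mu> :: "('m::finite \<Rightarrow> 'n::finite) \<Rightarrow> real"
  shows "mixture \<mu> i j = (\<Sum>f\<in>UNIV. \<mu> f * of_bool (f i = j))"
  by (simp add: mixture_def sum.inter_filter[symmetric])

lemma mixture_add:
  fixes \<mu> \<nu> :: "('m::finite \<Rightarrow> 'n::finite) \<Rightarrow> real"
  shows "mixture (\<lambda>f. \<mu> f + \<nu> f) i j = mixture \<mu> i j + mixture \<nu> i j"
  by (simp add: mixture_def sum.distrib)

lemma mixture_point_mass:
  fixes f :: "'m::finite \<Rightarrow> 'n::finite"
  shows "mixture (\<lambda>g. t * of_bool (g = f)) i j = t * of_bool (f i = j)"
proof -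
  have "(\<lambda>g. t * of_bool (g = f) * of_bool (g i = j)) = (\<lambda>g. if g = f then t * of_bool (f i = j) else 0)"
    by auto
  thus ?thesis by (simp add: mixture_eq_sum)
qed

lemma mixture_constants:
  fixes \<alpha> :: "'n::finite \<Rightarrow> real"
  shows "mixture (\<lambda>f::'m::finite \<Rightarrow> 'n. \<Sum>k\<in>UNIV. \<alpha> k * of_bool (f = (\<lambda>_. k))) i j = \<alpha> j"
proof -
  have "mixture (\<lambda>f::'m \<Rightarrow> 'n. \<Sum>k\<in>UNIV. \<alpha> k * of_bool (f = (\<lambda>_. k))) i j
      = (\<Sum>k\<in>UNIV. mixture (\<lambda>f::'m \<Rightarrow> 'n. \<alpha> k * of_bool (f = (\<lambda>_. k))) i j)"
    unfolding mixture_def by (rule sum.swap)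
  also have "\<dots> = \<alpha> j"
    by (simp only: mixture_point_mass) simp
  finally show ?thesis .
qed

lemma sum_mixture_row:
  fixes \<mu> :: "('m::finite \<Rightarrow> 'n::finite) \<Rightarrow> real"
  shows "(\<Sum>j\<in>UNIV. mixture \<mu> i j) = (\<Sum>f\<in>UNIV. \<mu> f)"
  unfolding mixture_eq_sum by (subst sum.swap) (simp add: sum_distrib_left[symmetric])

lemma sum_mixture_column:
  fixes \<mu> :: "('m::finite \<Rightarrow> 'n::finite) \<Rightarrow> real"
  shows "(\<Sum>i\<in>UNIV. mixture \<mu> i j) = (\<Sum>f\<in>UNIV. \<mu> f * real (card {i. f i = j}))"
  unfolding mixture_eq_sum
  by (subst sum.swap) (simp add: sum_distrib_left[symmetric] of_bool_def sum.If_cases)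

lemma weight_le_mixture:
  fixes \<mu> :: "('m::finite \<Rightarrow> 'n::finite) \<Rightarrow> real"
  assumes "\<forall>g. 0 \<le> \<mu> g"
  shows "\<mu> f \<le> mixture \<mu> i (f i)"
  unfolding mixture_def by (rule member_le_sum) (use assms in auto)

lemma card_fibre_nonconstant:
  fixes f :: "'m::finite \<Rightarrow> 'n"
  assumes "\<forall>k. f \<noteq> (\<lambda>_. k)"
  shows "card {i. f i = j} < CARD('m)"
proof -
  have "{i. f i = j} \<subset> UNIV" using assms by auto
  thus ?thesis by (simp add: psubset_card_mono)
qed

lemma sum_mixture_column_le:
  fixes \<mu> :: "('m::finite \<Rightarrow> 'n::finite) \<Rightarrow> real"
  assumes nonneg: "\<forall>f. 0 \<le> \<mu> f"
  shows "(\<Sum>i\<in>UNIV. mixture \<mu> i j) \<le> (real CARD('m) - 1) * (\<Sum>f\<in>UNIV. \<mu> f) + \<mu> (\<lambda>_. j)"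
proof -
  have "\<mu> f * real (card {i. f i = j}) \<le> \<mu> f * (real CARD('m) - 1) + \<mu> f * of_bool (f = (\<lambda>_. j))"
    for f :: "'m \<Rightarrow> 'n"
  proof (cases "\<exists>k. f = (\<lambda>_. k)")
    case True
    then obtain k where k: "f = (\<lambda>_. k)" by blast
    have "1 \<le> real CARD('m)" by (simp add: Suc_le_eq)
    hence "0 \<le> \<mu> f * (real CARD('m) - 1)" using nonneg by simp
    thus ?thesis unfolding k by (cases "k = j") (simp_all add: algebra_simps fun_eq_iff)
  next
    case False
    hence "card {i. f i = j} < CARD('m)" by (intro card_fibre_nonconstant) blast
    hence "real (Suc (card {i. f i = j})) \<le> real CARD('m)" by (simp only: of_nat_le_iff Suc_le_eq)
    hence "real (card {i. f i = j}) \<le> real CARD('m) - 1" by simp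
    thus ?thesis using nonneg[rule_format, of f] False by (auto intro: mult_left_mono)
  qed
  hence "(\<Sum>i\<in>UNIV. mixture \<mu> i j)
      \<le> (\<Sum>f\<in>UNIV. \<mu> f * (real CARD('m) - 1) + \<mu> f * of_bool (f = (\<lambda>_. j)))"
    unfolding sum_mixture_column by (rule sum_mono)
  also have "\<dots> = (real CARD('m) - 1) * (\<Sum>f\<in>UNIV. \<mu> f) + \<mu> (\<lambda>_. j)"
    by (simp add: sum.distrib sum_distrib_right[symmetric] mult.commute)
  finally show ?thesis .
qed

section \<open>Greedy peeling\<close>

definition scaled_channel :: "('m \<Rightarrow> 'n \<Rightarrow> real) \<Rightarrow> real \<Rightarrow> bool" where
  "scaled_channel W s \<longleftrightarrow> (\<forall>i j. 0 \<le> W i j) \<and> (\<forall>i. (\<Sum>j\<in>UNIV. W i j) = s)"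

definition peel :: "real \<Rightarrow> ('m \<Rightarrow> 'n) \<Rightarrow> ('m \<Rightarrow> 'n \<Rightarrow> real) \<Rightarrow> 'm \<Rightarrow> 'n \<Rightarrow> real" where
  "peel t f W i j = W i j - t * of_bool (f i = j)"

definition nonzero_entries :: "('m \<Rightarrow> 'n \<Rightarrow> real) \<Rightarrow> ('m \<times> 'n) set" where
  "nonzero_entries W = {(i, j). W i j \<noteq> 0}"

lemma scaled_channel_entry_le:
  fixes W :: "'m \<Rightarrow> 'n::finite \<Rightarrow> real"
  assumes "scaled_channel W s"
  shows "W i j \<le> s"
proof -
  have "W i j \<le> (\<Sum>j\<in>UNIV. W i j)"
    by (rule member_le_sum) (use assms in \<open>auto simp: scaled_channel_def\<close>)
  thus ?thesis using assms by (simp add: scaled_channel_def)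
qed

lemma scaled_channel_zero:
  fixes W :: "'m \<Rightarrow> 'n::finite \<Rightarrow> real"
  assumes "scaled_channel W s" and "s \<le> 0"
  shows "W = (\<lambda>_ _. 0)"
proof (intro ext)
  fix i j
  have "W i j \<le> 0" using scaled_channel_entry_le[OF assms(1)] assms(2) by (rule order_trans)
  moreover have "0 \<le> W i j" using assms(1) by (simp add: scaled_channel_def)
  ultimately show "W i j = 0" by simp
qed

lemma scaled_channel_other_positive:
  fixes W :: "'m \<Rightarrow> 'n::finite \<Rightarrow> real"
  assumes "scaled_channel W s" and "W i j0 < s"
  shows "\<exists>j. j \<noteq> j0 \<and> 0 < W i j"
proof (rule ccontr)
  assume "\<not> ?thesis"
  moreover have "\<forall>j. 0 \<le> W i j" using assms(1) by (simp add: scaled_channel_def)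
  ultimately have "\<forall>j\<in>UNIV - {j0}. W i j = 0" by (auto simp: not_less intro: order.antisym)
  hence "(\<Sum>j\<in>UNIV. W i j) = W i j0" by (simp add: sum.remove[of UNIV j0])
  moreover have "(\<Sum>j\<in>UNIV. W i j) = s" using assms(1) by (simp add: scaled_channel_def)
  ultimately show False using assms(2) by linarith
qed

lemma scaled_channel_positive:
  fixes W :: "'m \<Rightarrow> 'n::finite \<Rightarrow> real"
  assumes "scaled_channel W s" and "0 < s"
  shows "\<exists>f. \<forall>i. 0 < W i (f i)"
proof -
  have "\<exists>j. 0 < W i j" for i
  proof (rule ccontr)
    assume "\<not> ?thesis"
    moreover have "\<forall>j. 0 \<le> W i j" using assms(1) by (simp add: scaled_channel_def)
    ultimately have "\<forall>j. W i j = 0" by (auto simp: not_less intro: order.antisym)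
    hence "(\<Sum>j\<in>UNIV. W i j) = 0" by simp
    thus False using assms by (simp add: scaled_channel_def)
  qed
  thus ?thesis by metis
qed

lemma sum_peel_row:
  fixes W :: "'m \<Rightarrow> 'n::finite \<Rightarrow> real"
  shows "(\<Sum>j\<in>UNIV. peel t f W i j) = (\<Sum>j\<in>UNIV. W i j) - t"
  by (simp add: peel_def sum_subtractf sum_distrib_left[symmetric])

lemma sum_peel_column:
  fixes W :: "'m::finite \<Rightarrow> 'n \<Rightarrow> real"
  shows "(\<Sum>i\<in>UNIV. peel t f W i j) = (\<Sum>i\<in>UNIV. W i j) - t * real (card {i. f i = j})"
  by (simp add: peel_def sum_subtractf sum_distrib_left[symmetric] of_bool_def sum.If_cases)

lemma scaled_channel_peel:
  fixes W :: "'m \<Rightarrow> 'n::finite \<Rightarrow> real"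
  assumes "scaled_channel W s" and "\<forall>i. t \<le> W i (f i)"
  shows "scaled_channel (peel t f W) (s - t)"
  using assms by (auto simp: scaled_channel_def peel_def sum_peel_row[unfolded peel_def])

lemma nonzero_entries_peel_subset:
  assumes "\<forall>i. 0 < W i (f i)"
  shows "nonzero_entries (peel t f W) \<subseteq> nonzero_entries W"
  using assms by (auto simp: nonzero_entries_def peel_def less_le)

lemma nonzero_entries_peel_psubset:
  assumes "\<forall>i. 0 < W i (f i)" and "t = W i0 (f i0)"
  shows "nonzero_entries (peel t f W) \<subset> nonzero_entries W"
proof -
  have "(i0, f i0) \<in> nonzero_entries W - nonzero_entries (peel t f W)"
    using assms by (auto simp: nonzero_entries_def peel_def less_le)
  thus ?thesis using nonzero_entries_peel_subset[of W f t] assms(1) by blast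
qed

lemma mixture_unpeel:
  fixes \<mu> :: "('m::finite \<Rightarrow> 'n::finite) \<Rightarrow> real"
  assumes "peel t f W = mixture \<mu>"
  shows "W = mixture (\<lambda>g. \<mu> g + t * of_bool (g = f))"
proof (intro ext)
  fix i j
  have "W i j = peel t f W i j + t * of_bool (f i = j)" by (simp add: peel_def)
  thus "W i j = mixture (\<lambda>g. \<mu> g + t * of_bool (g = f)) i j"
    by (simp add: assms mixture_add mixture_point_mass)
qed

lemma mixture_exists_by_peeling:
  fixes P :: "('m::finite \<Rightarrow> 'n::finite \<Rightarrow> real) \<Rightarrow> real \<Rightarrow> bool"
    and F :: "('m \<Rightarrow> 'n) set" and potential :: "('m \<Rightarrow> 'n \<Rightarrow> real) \<Rightarrow> real \<Rightarrow> nat"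
  assumes "P W s"
    and stop: "\<And>W s. P W s \<Longrightarrow> s \<le> 0 \<Longrightarrow> W = (\<lambda>_ _. 0)"
    and step: "\<And>W s. P W s \<Longrightarrow> 0 < s \<Longrightarrow> \<exists>f\<in>F. \<exists>t>0.
        P (peel t f W) (s - t) \<and> potential (peel t f W) (s - t) < potential W s"
  shows "\<exists>\<mu>. (\<forall>f. 0 \<le> \<mu> f) \<and> (\<forall>f. f \<notin> F \<longrightarrow> \<mu> f = 0) \<and> W = mixture \<mu>"
  using assms(1)
proof (induction "potential W s" arbitrary: W s rule: less_induct)
  case less
  show ?case
  proof (cases "0 < s")
    case True
    then obtain f t where "f \<in> F" "0 < t" and peeled: "P (peel t f W) (s - t)"
      and smaller: "potential (peel t f W) (s - t) < potential W s"
      using step[OF less.prems] by blast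
    obtain \<mu> where \<mu>: "\<forall>f. 0 \<le> \<mu> f" "\<forall>f. f \<notin> F \<longrightarrow> \<mu> f = 0" "peel t f W = mixture \<mu>"
      using less.hyps[OF smaller peeled] by blast
    define \<nu> where "\<nu> g = \<mu> g + t * of_bool (g = f)" for g
    have "W = mixture \<nu>"
      unfolding \<nu>_def using \<mu>(3) by (rule mixture_unpeel)
    moreover have "\<forall>g. 0 \<le> \<nu> g" using \<mu>(1) \<open>0 < t\<close> by (simp add: \<nu>_def)
    moreover have "\<forall>g. g \<notin> F \<longrightarrow> \<nu> g = 0" using \<mu>(2) \<open>f \<in> F\<close> by (auto simp: \<nu>_def)
    ultimately show ?thesis by blast
  next
    case False
    have "W = (\<lambda>_ _. 0)" using stop[OF less.prems] False by simp
    hence "W = mixture (\<lambda>_. 0)" by (simp add: mixture_def fun_eq_iff)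
    thus ?thesis by (intro exI[of _ "\<lambda>_. 0"]) simp
  qed
qed

lemma mixture_exists:
  fixes W :: "'m::finite \<Rightarrow> 'n::finite \<Rightarrow> real"
  assumes "scaled_channel W s"
  shows "\<exists>\<mu>. (\<forall>f. 0 \<le> \<mu> f) \<and> W = mixture \<mu>"
proof -
  have "\<exists>\<mu>. (\<forall>f. 0 \<le> \<mu> f) \<and> (\<forall>f. f \<notin> UNIV \<longrightarrow> \<mu> f = 0) \<and> W = mixture \<mu>"
  proof (rule mixture_exists_by_peeling[where P = scaled_channel
        and potential = "\<lambda>W s. card (nonzero_entries W)"])
    show "scaled_channel W s" by (rule assms)
  next
    fix W :: "'m \<Rightarrow> 'n \<Rightarrow> real" and s :: real
    assume "scaled_channel W s" "s \<le> 0"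
    thus "W = (\<lambda>_ _. 0)" by (rule scaled_channel_zero)
  next
    fix W :: "'m \<Rightarrow> 'n \<Rightarrow> real" and s :: real
    assume W: "scaled_channel W s" and "0 < s"
    then obtain f where pos: "\<forall>i. 0 < W i (f i)" using scaled_channel_positive by blast
    define t where "t = Min (range (\<lambda>i. W i (f i)))"
    have "t \<in> range (\<lambda>i. W i (f i))" unfolding t_def by (rule Min_in) auto
    then obtain i0 where "t = W i0 (f i0)" by blast
    hence "card (nonzero_entries (peel t f W)) < card (nonzero_entries W)"
      using pos by (simp add: psubset_card_mono nonzero_entries_peel_psubset)
    moreover have "scaled_channel (peel t f W) (s - t)"
      using W by (rule scaled_channel_peel) (simp add: t_def)
    moreover have "0 < t" using pos by (simp add: t_def)
    ultimately show "\<exists>f\<in>UNIV. \<exists>t>0. scaled_channel (peel t f W) (s - t)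
        \<and> card (nonzero_entries (peel t f W)) < card (nonzero_entries W)"
      by blast
  qed
  thus ?thesis by blast
qed

section \<open>Peeling off non-constant maps\<close>

definition column_bounded :: "('m::finite \<Rightarrow> 'n \<Rightarrow> real) \<Rightarrow> real \<Rightarrow> bool" where
  "column_bounded W s \<longleftrightarrow> (\<forall>j. (\<Sum>i\<in>UNIV. W i j) \<le> (real CARD('m) - 1) * s)"

definition slack_columns :: "('m::finite \<Rightarrow> 'n \<Rightarrow> real) \<Rightarrow> real \<Rightarrow> 'n set" where
  "slack_columns W s = {j. (\<Sum>i\<in>UNIV. W i j) < (real CARD('m) - 1) * s}"

lemma scaled_channel_total:
  fixes W :: "'m::finite \<Rightarrow> 'n::finite \<Rightarrow> real"
  assumes "scaled_channel W s"
  shows "(\<Sum>j\<in>UNIV. \<Sum>i\<in>UNIV. W i j) = real CARD('m) * s"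
  using assms by (subst sum.swap) (simp add: scaled_channel_def)

lemma column_bounded_entry_below:
  fixes W :: "'m::finite \<Rightarrow> 'n::finite \<Rightarrow> real"
  assumes "column_bounded W s" and "0 < s"
  shows "\<exists>i. W i j < s"
proof (rule ccontr)
  assume "\<not> ?thesis"
  hence "(\<Sum>i\<in>(UNIV::'m set). s) \<le> (\<Sum>i\<in>UNIV. W i j)" by (intro sum_mono) (simp add: not_less)
  also have "\<dots> \<le> (real CARD('m) - 1) * s" using assms(1) by (simp add: column_bounded_def)
  finally show False using assms(2) by (simp add: algebra_simps)
qed

text \<open>In a tight column the deficits s - W i j0 sum to s, so once one of them is positive
  none of the others can reach s.\<close>

lemma tight_column_positive:
  fixes W :: "'m::finite \<Rightarrow> 'n::finite \<Rightarrow> real"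
  assumes W: "scaled_channel W s" and tight: "(\<Sum>i\<in>UNIV. W i j0) = (real CARD('m) - 1) * s"
    and "W i1 j0 < s" and "i \<noteq> i1"
  shows "0 < W i j0"
proof (rule ccontr)
  assume "\<not> 0 < W i j0"
  hence "W i j0 = 0" using W by (auto simp: scaled_channel_def intro: order.antisym)
  define d where "d k = s - W k j0" for k
  have "\<forall>k. 0 \<le> d k" using scaled_channel_entry_le[OF W] by (simp add: d_def)
  hence "(\<Sum>k\<in>{i, i1}. d k) \<le> (\<Sum>k\<in>UNIV. d k)" by (intro sum_mono2) auto
  also have "\<dots> = s" using tight by (simp add: d_def sum_subtractf algebra_simps)
  finally show False using \<open>W i j0 = 0\<close> assms(3,4) by (simp add: d_def)
qed

lemma two_tight_columns:
  fixes W :: "'m::finite \<Rightarrow> 'n::finite \<Rightarrow> real"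
  assumes W: "scaled_channel W s" and "0 < s" and "2 \<le> CARD('m)"
    and tight: "j0 \<notin> slack_columns W s" "j \<notin> slack_columns W s" and bounded: "column_bounded W s"
    and "j \<noteq> j0" and "j1 \<noteq> j0" and "0 < W i1 j1"
  shows "j1 = j \<and> CARD('m) = 2"
proof -
  define c where "c k = (\<Sum>i\<in>UNIV. W i k)" for k
  have c_nonneg: "\<forall>k. 0 \<le> c k" using W by (simp add: c_def scaled_channel_def sum_nonneg)
  have c_tight: "c j0 = (real CARD('m) - 1) * s" "c j = (real CARD('m) - 1) * s"
    using tight bounded by (auto simp: c_def slack_columns_def column_bounded_def not_less
        intro: order.antisym)
  have total: "(\<Sum>k\<in>UNIV. c k) = real CARD('m) * s"
    unfolding c_def by (rule scaled_channel_total[OF W])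
  have "(\<Sum>k\<in>{j0, j}. c k) \<le> (\<Sum>k\<in>UNIV. c k)" using c_nonneg by (intro sum_mono2) auto
  hence "2 * (real CARD('m) - 1) * s \<le> real CARD('m) * s"
    using c_tight total \<open>j \<noteq> j0\<close> by (simp add: algebra_simps)
  hence "CARD('m) = 2" using \<open>0 < s\<close> \<open>2 \<le> CARD('m)\<close> by (simp add: mult_le_cancel_right)
  moreover have "j1 = j"
  proof (rule ccontr)
    assume "j1 \<noteq> j"
    have "W i1 j1 \<le> c j1" unfolding c_def by (rule member_le_sum) (use W in \<open>auto simp: scaled_channel_def\<close>)
    moreover have "(\<Sum>k\<in>{j0, j, j1}. c k) \<le> (\<Sum>k\<in>UNIV. c k)" using c_nonneg by (intro sum_mono2) auto
    ultimately show False
      using c_tight total \<open>CARD('m) = 2\<close> assms(7-9) \<open>j1 \<noteq> j\<close> by simp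
  qed
  ultimately show ?thesis by blast
qed

lemma nonconstant_selection:
  fixes W :: "'m::finite \<Rightarrow> 'n::finite \<Rightarrow> real"
  assumes m: "2 \<le> CARD('m)" and W: "scaled_channel W s" and s: "0 < s"
    and bounded: "column_bounded W s"
  shows "\<exists>f. (\<forall>k. f \<noteq> (\<lambda>_. k)) \<and> (\<forall>i. 0 < W i (f i))
    \<and> (\<forall>j. j \<notin> slack_columns W s \<longrightarrow> card {i. f i = j} = CARD('m) - 1)"
proof -
  obtain g where g: "\<forall>i. 0 < W i (g i)" using scaled_channel_positive[OF W s] by blast
  show ?thesis
  proof (cases "(\<forall>j. j \<in> slack_columns W s) \<and> (\<forall>k. g \<noteq> (\<lambda>_. k))")
    case True
    thus ?thesis using g by blast
  next
    case False
    then obtain j0 where j0: "j0 \<notin> slack_columns W s \<or> (\<forall>j. j \<in> slack_columns W s) \<and> g = (\<lambda>_. j0)"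
      by blast
    obtain i1 where i1: "W i1 j0 < s" using column_bounded_entry_below[OF bounded s] by blast
    obtain j1 where j1: "j1 \<noteq> j0" "0 < W i1 j1" using scaled_channel_other_positive[OF W i1] by blast
    have "UNIV \<noteq> {i1}"
    proof
      assume "UNIV = {i1}"
      hence "CARD('m) = card {i1}" by (rule arg_cong)
      thus False using m by simp
    qed
    then obtain i2 where i2: "i2 \<noteq> i1" by blast
    have pos: "0 < W i j0" if "i \<noteq> i1" for i
      using j0
    proof
      assume "j0 \<notin> slack_columns W s"
      hence "(\<Sum>i\<in>UNIV. W i j0) = (real CARD('m) - 1) * s"
        using bounded by (auto simp: slack_columns_def column_bounded_def intro: order.antisym)
      thus ?thesis using tight_column_positive[OF W _ i1 that] by blast
    qed (use g in auto)
    define f where "f = (\<lambda>_. j0)(i1 := j1)"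
    have "\<forall>k. f \<noteq> (\<lambda>_. k)"
      using i2 j1(1) by (auto simp: f_def fun_eq_iff)
    moreover have "\<forall>i. 0 < W i (f i)" using pos j1(2) by (simp add: f_def)
    moreover have "card {i. f i = j} = CARD('m) - 1" if "j \<notin> slack_columns W s" for j
    proof (cases "j = j0")
      case True
      hence "{i. f i = j} = UNIV - {i1}" using j1(1) by (auto simp: f_def)
      thus ?thesis by (simp add: card_Diff_singleton)
    next
      case False
      hence "j0 \<notin> slack_columns W s" using j0 that by blast
      hence "j1 = j \<and> CARD('m) = 2"
        using two_tight_columns[OF W s m _ that bounded False j1] by blast
      hence "{i. f i = j} = {i1}" using False by (auto simp: f_def)
      thus ?thesis using \<open>j1 = j \<and> CARD('m) = 2\<close> by simp
    qed
    ultimately show ?thesis by blast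
  qed
qed

lemma column_bounded_peel:
  fixes W :: "'m::finite \<Rightarrow> 'n \<Rightarrow> real"
  assumes bounded: "column_bounded W s"
    and slack: "\<And>j. real (card {i. f i = j}) < real CARD('m) - 1 \<Longrightarrow>
      t * (real CARD('m) - 1 - real (card {i. f i = j})) \<le> (real CARD('m) - 1) * s - (\<Sum>i\<in>UNIV. W i j)"
    and fibres: "\<And>j. card {i. f i = j} < CARD('m)"
  shows "column_bounded (peel t f W) (s - t)"
  unfolding column_bounded_def sum_peel_column
proof
  fix j
  show "(\<Sum>i\<in>UNIV. W i j) - t * real (card {i. f i = j}) \<le> (real CARD('m) - 1) * (s - t)"
  proof (cases "real (card {i. f i = j}) < real CARD('m) - 1")
    case True
    thus ?thesis using slack[OF True] by (simp add: algebra_simps)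
  next
    case False
    hence k: "real (card {i. f i = j}) = real CARD('m) - 1"
      using fibres[of j] by linarith
    have "(\<Sum>i\<in>UNIV. W i j) \<le> (real CARD('m) - 1) * s"
      using bounded by (simp add: column_bounded_def)
    thus ?thesis unfolding k by (simp add: algebra_simps)
  qed
qed

lemma slack_columns_peel_subset:
  fixes W :: "'m::finite \<Rightarrow> 'n \<Rightarrow> real"
  assumes bounded: "column_bounded W s"
    and tight: "\<forall>j. j \<notin> slack_columns W s \<longrightarrow> card {i. f i = j} = CARD('m) - 1"
  shows "slack_columns (peel t f W) (s - t) \<subseteq> slack_columns W s"
proof
  fix j assume j: "j \<in> slack_columns (peel t f W) (s - t)"
  show "j \<in> slack_columns W s"
  proof (rule ccontr)
    assume "j \<notin> slack_columns W s"
    hence c: "(\<Sum>i\<in>UNIV. W i j) = (real CARD('m) - 1) * s"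
      and k: "real (card {i. f i = j}) = real CARD('m) - 1"
      using bounded tight
      by (auto simp: slack_columns_def column_bounded_def of_nat_diff Suc_le_eq intro: order.antisym)
    from j have "(\<Sum>i\<in>UNIV. W i j) - t * real (card {i. f i = j}) < (real CARD('m) - 1) * (s - t)"
      by (simp add: slack_columns_def sum_peel_column)
    thus False unfolding c k by (simp add: algebra_simps)
  qed
qed

lemma card_add_less_of_psubset:
  fixes A :: "'a::finite set" and B :: "'b::finite set"
  assumes "A' \<subseteq> A" and "B' \<subseteq> B" and "A' \<subset> A \<or> B' \<subset> B"
  shows "card A' + card B' < card A + card B"
proof -
  have "card A' \<le> card A" "card B' \<le> card B" using assms(1,2) by (simp_all add: card_mono)
  moreover have "card A' < card A \<or> card B' < card B" using assms(3) by (meson finite psubset_card_mono)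
  ultimately show ?thesis by linarith
qed

lemma nonconstant_peel_step:
  fixes W :: "'m::finite \<Rightarrow> 'n::finite \<Rightarrow> real"
  assumes m: "2 \<le> CARD('m)" and W: "scaled_channel W s" and s: "0 < s"
    and bounded: "column_bounded W s"
  shows "\<exists>f\<in>{f. \<forall>k. f \<noteq> (\<lambda>_. k)}. \<exists>t>0.
    (scaled_channel (peel t f W) (s - t) \<and> column_bounded (peel t f W) (s - t))
    \<and> card (nonzero_entries (peel t f W)) + card (slack_columns (peel t f W) (s - t))
      < card (nonzero_entries W) + card (slack_columns W s)"
proof -
  obtain f where nonconst: "\<forall>k. f \<noteq> (\<lambda>_. k)" and pos: "\<forall>i. 0 < W i (f i)"
    and tight: "\<forall>j. j \<notin> slack_columns W s \<longrightarrow> card {i. f i = j} = CARD('m) - 1"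
    using nonconstant_selection[OF m W s bounded] by blast
  define K where "K = real CARD('m) - 1"
  define k where "k j = real (card {i. f i = j})" for j
  define c where "c j = (\<Sum>i\<in>UNIV. W i j)" for j
  define J where "J = {j. k j < K}"
  define ratio where "ratio j = (K * s - c j) / (K - k j)" for j
  \<comment> \<open>The largest step keeping every entry on f nonnegative and every column within the
    bound: reaching the first limit zeroes an entry, reaching the second makes a slack column tight.\<close>
  define t where "t = Min (range (\<lambda>i. W i (f i)) \<union> ratio ` J)"
  have fibres: "card {i. f i = j} < CARD('m)" for j
    using nonconst by (intro card_fibre_nonconstant) blast
  have J_slack: "j \<in> slack_columns W s" if "j \<in> J" for j
    using tight that m by (auto simp: J_def k_def K_def of_nat_diff)
  have ratio_pos: "0 < ratio j" if "j \<in> J" for j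
    using J_slack[OF that] that by (simp add: ratio_def J_def slack_columns_def c_def K_def)
  have fin: "finite (range (\<lambda>i. W i (f i)) \<union> ratio ` J)" by simp
  have t_le_entry: "t \<le> W i (f i)" for i
    unfolding t_def using fin by (intro Min_le) auto
  have t_le_ratio: "t \<le> ratio j" if "j \<in> J" for j
    unfolding t_def using fin that by (intro Min_le) auto
  have "0 < t" unfolding t_def using fin pos ratio_pos by (subst Min_gr_iff) auto
  have t_cases: "t \<in> range (\<lambda>i. W i (f i)) \<union> ratio ` J"
    unfolding t_def using fin by (intro Min_in) auto
  have W': "scaled_channel (peel t f W) (s - t)"
    using W t_le_entry by (intro scaled_channel_peel) auto
  have bounded': "column_bounded (peel t f W) (s - t)"
  proof (rule column_bounded_peel[OF bounded _ fibres])
    fix j assume "real (card {i. f i = j}) < real CARD('m) - 1"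
    hence "j \<in> J" "0 < K - k j" by (auto simp: J_def k_def K_def)
    hence "t * (K - k j) \<le> K * s - c j" using t_le_ratio by (simp add: ratio_def le_divide_eq)
    thus "t * (real CARD('m) - 1 - real (card {i. f i = j})) \<le> (real CARD('m) - 1) * s - (\<Sum>i\<in>UNIV. W i j)"
      by (simp add: K_def k_def c_def)
  qed
  have entries: "nonzero_entries (peel t f W) \<subseteq> nonzero_entries W"
    using pos by (rule nonzero_entries_peel_subset)
  have slack: "slack_columns (peel t f W) (s - t) \<subseteq> slack_columns W s"
    using bounded tight by (rule slack_columns_peel_subset)
  have "nonzero_entries (peel t f W) \<subset> nonzero_entries W
      \<or> slack_columns (peel t f W) (s - t) \<subset> slack_columns W s"
    using t_cases
  proof
    assume "t \<in> range (\<lambda>i. W i (f i))"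
    then obtain i0 where "t = W i0 (f i0)" by blast
    hence "nonzero_entries (peel t f W) \<subset> nonzero_entries W"
      by (rule nonzero_entries_peel_psubset[of W f t i0, OF pos])
    thus ?thesis ..
  next
    assume "t \<in> ratio ` J"
    then obtain j0 where j0: "j0 \<in> J" "t = ratio j0" by blast
    hence "0 < K - k j0" by (simp add: J_def)
    hence "t * (K - k j0) = K * s - c j0" using j0(2) by (simp add: ratio_def)
    hence "j0 \<notin> slack_columns (peel t f W) (s - t)"
      by (simp add: slack_columns_def sum_peel_column K_def k_def c_def algebra_simps)
    thus ?thesis using J_slack[OF j0(1)] slack by blast
  qed
  with entries slack have "card (nonzero_entries (peel t f W)) + card (slack_columns (peel t f W) (s - t))
      < card (nonzero_entries W) + card (slack_columns W s)"
    by (rule card_add_less_of_psubset)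
  thus ?thesis using nonconst \<open>0 < t\<close> W' bounded' by blast
qed

lemma mixture_nonconstant_exists:
  fixes W :: "'m::finite \<Rightarrow> 'n::finite \<Rightarrow> real"
  assumes "2 \<le> CARD('m)" and "scaled_channel W s" and "column_bounded W s"
  shows "\<exists>\<mu>. (\<forall>f. 0 \<le> \<mu> f) \<and> (\<forall>k. \<mu> (\<lambda>_. k) = 0) \<and> W = mixture \<mu>"
proof -
  have "\<exists>\<mu>. (\<forall>f. 0 \<le> \<mu> f) \<and> (\<forall>f. f \<notin> {f. \<forall>k. f \<noteq> (\<lambda>_. k)} \<longrightarrow> \<mu> f = 0) \<and> W = mixture \<mu>"
  proof (rule mixture_exists_by_peeling[where P = "\<lambda>W s. scaled_channel W s \<and> column_bounded W s"
        and potential = "\<lambda>W s. card (nonzero_entries W) + card (slack_columns W s)"])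
    show "scaled_channel W s \<and> column_bounded W s" using assms by blast
  next
    fix W :: "'m \<Rightarrow> 'n \<Rightarrow> real" and s :: real
    assume "scaled_channel W s \<and> column_bounded W s" "s \<le> 0"
    thus "W = (\<lambda>_ _. 0)" using scaled_channel_zero by blast
  next
    fix W :: "'m \<Rightarrow> 'n \<Rightarrow> real" and s :: real
    assume "scaled_channel W s \<and> column_bounded W s" "0 < s"
    thus "\<exists>f\<in>{f. \<forall>k. f \<noteq> (\<lambda>_. k)}. \<exists>t>0.
        (scaled_channel (peel t f W) (s - t) \<and> column_bounded (peel t f W) (s - t))
        \<and> card (nonzero_entries (peel t f W)) + card (slack_columns (peel t f W) (s - t))
          < card (nonzero_entries W) + card (slack_columns W s)"
      using nonconstant_peel_step[OF assms(1)] by blast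
  qed
  then obtain \<mu> where "\<forall>f. 0 \<le> \<mu> f" "W = mixture \<mu>"
    and "\<forall>f. f \<notin> {f. \<forall>k. f \<noteq> (\<lambda>_. k)} \<longrightarrow> \<mu> f = 0"
    by blast
  moreover from this(3) have "\<forall>k. \<mu> (\<lambda>_. k) = 0" by blast
  ultimately show ?thesis by blast
qed

section \<open>Deterministic channels\<close>

definition det_matrix :: "('m::finite \<Rightarrow> 'n::finite) \<Rightarrow> real^'n^'m" where
  "det_matrix f = (\<chi> i j. of_bool (f i = j))"

lemma det_matrix_nth [simp]: "det_matrix f $ i $ j = of_bool (f i = j)"
  by (simp add: det_matrix_def)

lemma inj_det_matrix: "inj det_matrix"
proof (rule injI)
  fix f g :: "'m::finite \<Rightarrow> 'n::finite"
  assume "det_matrix f = det_matrix g"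
  hence "det_matrix f $ i $ f i = det_matrix g $ i $ f i" for i by simp
  thus "f = g" by (auto simp: fun_eq_iff)
qed

lemma det_channels_eq_range: "det_channels = range det_matrix"
proof (intro set_eqI iffI)
  fix D :: "real^'n::finite^'m::finite"
  assume "D \<in> det_channels"
  hence zero_one: "\<forall>i j. D $ i $ j = 0 \<or> D $ i $ j = 1"
    and rows: "\<forall>i. (\<Sum>j\<in>UNIV. D $ i $ j) = 1" and nonneg: "\<forall>i j. 0 \<le> D $ i $ j"
    by (auto simp: det_channels_def channel_def)
  have "\<exists>j. D $ i $ j = 1" for i
    using rows[rule_format, of i] zero_one by (metis (mono_tags) sum.neutral zero_neq_one)
  then obtain f where f: "\<forall>i. D $ i $ f i = 1" by metis
  have "D $ i $ j = of_bool (f i = j)" for i j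
  proof (cases "f i = j")
    case False
    have "(\<Sum>k\<in>{f i, j}. D $ i $ k) \<le> (\<Sum>k\<in>UNIV. D $ i $ k)"
      using nonneg by (intro sum_mono2) auto
    thus ?thesis using False f rows zero_one[rule_format, of i j] by auto
  qed (use f in auto)
  hence "D = det_matrix f" by (simp add: vec_eq_iff)
  thus "D \<in> range det_matrix" by blast
next
  fix D :: "real^'n::finite^'m::finite"
  assume "D \<in> range det_matrix"
  thus "D \<in> det_channels" by (auto simp: det_channels_def channel_def)
qed

lemma row_det_matrix: "row i (det_matrix f) = axis (f i) 1"
  by (simp add: row_def axis_def vec_eq_iff)

lemma rank_det_matrix_eq_1_iff:
  fixes f :: "'m::finite \<Rightarrow> 'n::finite"
  shows "rank (det_matrix f) = 1 \<longleftrightarrow> (\<exists>k. f = (\<lambda>_. k))"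
proof
  assume rank: "rank (det_matrix f) = 1"
  show "\<exists>k. f = (\<lambda>_. k)"
  proof (rule ccontr)
    assume "\<nexists>k. f = (\<lambda>_. k)"
    then obtain a b where "f a \<noteq> f b" by (metis ext)
    have "{axis (f a) 1, axis (f b) 1} \<subseteq> rows (det_matrix f)"
      unfolding rows_def by (auto simp: row_det_matrix[symmetric])
    moreover have "independent {axis (f a) (1::real), axis (f b) 1}"
      by (rule independent_mono[OF independent_Basis]) auto
    moreover have "card {axis (f a) (1::real), axis (f b) 1} = 2"
      using \<open>f a \<noteq> f b\<close> by (simp add: axis_eq_axis)
    ultimately have "2 \<le> dim (rows (det_matrix f))" by (metis independent_card_le_dim)
    thus False using rank by (simp add: row_rank_def)
  qed
next
  assume "\<exists>k. f = (\<lambda>_. k)"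
  then obtain k where "f = (\<lambda>_. k)" by blast
  hence "rows (det_matrix f) = {axis k 1}" unfolding rows_def by (auto simp: row_det_matrix)
  thus "rank (det_matrix f) = 1" by (simp add: row_rank_def axis_eq_axis)
qed

lemma sum_det_channels:
  fixes h :: "real^'n::finite^'m::finite \<Rightarrow> 'a::comm_monoid_add"
  shows "(\<Sum>D\<in>det_channels. h D) = (\<Sum>f\<in>UNIV. h (det_matrix f))"
  unfolding det_channels_eq_range by (simp add: sum.reindex[OF inj_det_matrix])

lemma sum_rank_one_det_channels:
  fixes h :: "real^'n::finite^'m::finite \<Rightarrow> real"
  shows "(\<Sum>D\<in>{D \<in> det_channels. rank D = 1}. h D) = (\<Sum>k\<in>UNIV. h (det_matrix (\<lambda>_::'m. k)))"
proof -
  have eq: "{D \<in> det_channels. rank D = 1} = (\<lambda>k. det_matrix (\<lambda>_::'m. k)) ` UNIV"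
    unfolding det_channels_eq_range by (auto simp del: One_nat_def simp add: rank_det_matrix_eq_1_iff)
  have inj: "inj (\<lambda>k. det_matrix (\<lambda>_::'m. k))"
    using inj_det_matrix by (auto simp: inj_def fun_eq_iff)
  show ?thesis unfolding eq by (simp only: sum.reindex[OF inj] comp_def)
qed

lemma P_values_1_obtain_mixture:
  fixes W :: "real^'n::finite^'m::finite"
  assumes "x \<in> P_values W 1"
  obtains \<mu> where "\<forall>f. 0 \<le> \<mu> f" and "\<forall>i j. W $ i $ j = mixture \<mu> i j"
    and "x = (\<Sum>k\<in>UNIV. \<mu> (\<lambda>_. k))"
proof -
  obtain lam where lam: "lam \<in> Lambda W" and x: "x = P_lam lam 1"
    using assms by (auto simp: P_values_def)
  define \<mu> where "\<mu> f = lam (det_matrix f)" for f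
  have "W = (\<Sum>f\<in>UNIV. \<mu> f *\<^sub>R det_matrix f)"
    using lam by (simp add: Lambda_def sum_det_channels \<mu>_def)
  hence "\<forall>i j. W $ i $ j = mixture \<mu> i j" by (simp add: mixture_eq_sum)
  moreover have "\<forall>f. 0 \<le> \<mu> f" using lam by (simp add: Lambda_def \<mu>_def)
  moreover have "x = (\<Sum>k\<in>UNIV. \<mu> (\<lambda>_. k))"
    using x by (simp del: One_nat_def add: P_lam_def sum_rank_one_det_channels \<mu>_def)
  ultimately show ?thesis using that by blast
qed

lemma mixture_in_P_values_1:
  fixes W :: "real^'n::finite^'m::finite"
  assumes "channel W" and nonneg: "\<forall>f. 0 \<le> \<mu> f" and W: "\<forall>i j. W $ i $ j = mixture \<mu> i j"
  shows "(\<Sum>k\<in>UNIV. \<mu> (\<lambda>_. k)) \<in> P_values W 1"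
proof -
  define lam where "lam D = (if D \<in> range det_matrix then \<mu> (inv det_matrix D) else 0)" for D
  have lam_det: "lam (det_matrix f) = \<mu> f" for f
    by (simp add: lam_def inv_f_f[OF inj_det_matrix])
  have "(\<Sum>f\<in>UNIV. \<mu> f) = (\<Sum>j\<in>UNIV. W $ undefined $ j)" using W by (simp add: sum_mixture_row)
  also have "\<dots> = 1" using assms(1) by (simp add: channel_def)
  finally have "(\<Sum>D\<in>det_channels. lam D) = 1" by (simp add: sum_det_channels lam_det)
  moreover have "W = (\<Sum>D\<in>det_channels. lam D *\<^sub>R D)"
    using W by (simp add: sum_det_channels lam_det vec_eq_iff mixture_eq_sum)
  moreover have "\<forall>D. 0 \<le> lam D" using nonneg by (simp add: lam_def)
  moreover have "\<forall>D. D \<notin> det_channels \<longrightarrow> lam D = 0" by (simp add: lam_def det_channels_eq_range)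
  ultimately have "lam \<in> Lambda W" by (simp add: Lambda_def)
  moreover have "P_lam lam 1 = (\<Sum>k\<in>UNIV. \<mu> (\<lambda>_. k))"
    by (simp del: One_nat_def add: P_lam_def sum_rank_one_det_channels lam_det)
  ultimately show ?thesis unfolding P_values_def by (metis image_eqI)
qed

section \<open>The extreme values of the rank-one weight\<close>

lemma P_values_1_le_sum_column_min:
  fixes W :: "real^'n::finite^'m::finite"
  assumes "x \<in> P_values W 1"
  shows "x \<le> (\<Sum>j\<in>UNIV. Min (range (\<lambda>i. W $ i $ j)))"
proof -
  obtain \<mu> where nonneg: "\<forall>f. 0 \<le> \<mu> f" and W: "\<forall>i j. W $ i $ j = mixture \<mu> i j"
    and x: "x = (\<Sum>k\<in>UNIV. \<mu> (\<lambda>_. k))"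
    using assms by (rule P_values_1_obtain_mixture)
  have "\<mu> (\<lambda>_. j) \<le> W $ i $ j" for i j
    using weight_le_mixture[OF nonneg, of "\<lambda>_. j" i] W by simp
  hence "\<mu> (\<lambda>_. j) \<le> Min (range (\<lambda>i. W $ i $ j))" for j by simp
  thus ?thesis unfolding x by (rule sum_mono)
qed

lemma column_excess_le_P_values_1:
  fixes W :: "real^'n::finite^'m::finite"
  assumes "channel W" and "x \<in> P_values W 1"
  shows "max (Max (range (\<lambda>j. \<Sum>i\<in>UNIV. W $ i $ j)) - real CARD('m) + 1) 0 \<le> x"
proof -
  obtain \<mu> where nonneg: "\<forall>f. 0 \<le> \<mu> f" and W: "\<forall>i j. W $ i $ j = mixture \<mu> i j"
    and x: "x = (\<Sum>k\<in>UNIV. \<mu> (\<lambda>_. k))"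
    using assms(2) by (rule P_values_1_obtain_mixture)
  have total: "(\<Sum>f\<in>UNIV. \<mu> f) = 1"
    using assms(1) W sum_mixture_row[of \<mu> undefined] by (simp add: channel_def)
  have column: "(\<Sum>i\<in>UNIV. W $ i $ j) \<le> real CARD('m) - 1 + x" for j
  proof -
    have "\<mu> (\<lambda>_. j) \<le> x" unfolding x using nonneg by (intro member_le_sum) auto
    moreover have "(\<Sum>i\<in>UNIV. mixture \<mu> i j) \<le> (real CARD('m) - 1) * (\<Sum>f\<in>UNIV. \<mu> f) + \<mu> (\<lambda>_. j)"
      by (rule sum_mixture_column_le[OF nonneg])
    ultimately show ?thesis using W total by simp
  qed
  have "Max (range (\<lambda>j. \<Sum>i\<in>UNIV. W $ i $ j)) \<in> range (\<lambda>j. \<Sum>i\<in>UNIV. W $ i $ j)"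
    by (rule Max_in) auto
  then obtain j where "Max (range (\<lambda>j. \<Sum>i\<in>UNIV. W $ i $ j)) = (\<Sum>i\<in>UNIV. W $ i $ j)"
    by blast
  moreover have "0 \<le> x" unfolding x using nonneg by (simp add: sum_nonneg)
  ultimately show ?thesis using column[of j] by simp
qed

lemma channel_scaled_channel: "channel W \<Longrightarrow> scaled_channel (\<lambda>i j. W $ i $ j) 1"
  by (simp add: channel_def scaled_channel_def)

lemma sum_column_min_in_P_values_1:
  fixes W :: "real^'n::finite^'m::finite"
  assumes "channel W"
  shows "(\<Sum>j\<in>UNIV. Min (range (\<lambda>i. W $ i $ j))) \<in> P_values W 1"
proof -
  define \<alpha> where "\<alpha> j = Min (range (\<lambda>i. W $ i $ j))" for j
  have \<alpha>_le: "\<alpha> j \<le> W $ i $ j" for i j by (simp add: \<alpha>_def)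
  have \<alpha>_nonneg: "0 \<le> \<alpha> j" for j using assms by (simp add: \<alpha>_def channel_def)
  have "scaled_channel (\<lambda>i j. W $ i $ j - \<alpha> j) (1 - (\<Sum>j\<in>UNIV. \<alpha> j))"
    using assms \<alpha>_le by (simp add: scaled_channel_def channel_def sum_subtractf)
  then obtain \<mu> where nonneg: "\<forall>f. 0 \<le> \<mu> f" and rest: "(\<lambda>i j. W $ i $ j - \<alpha> j) = mixture \<mu>"
    using mixture_exists by blast
  define \<nu> where "\<nu> = (\<lambda>f. \<mu> f + (\<Sum>k\<in>UNIV. \<alpha> k * of_bool (f = (\<lambda>_. k))))"
  define x where "x = (\<Sum>k\<in>UNIV. \<nu> (\<lambda>_. k))"
  have "mixture \<nu> i j = mixture \<mu> i j + \<alpha> j" for i j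
    unfolding \<nu>_def by (simp only: mixture_add mixture_constants)
  hence "W $ i $ j = mixture \<nu> i j" for i j
    using fun_cong[OF fun_cong[OF rest, of i], of j] by simp
  moreover have "\<forall>f. 0 \<le> \<nu> f" using nonneg \<alpha>_nonneg by (simp add: \<nu>_def sum_nonneg)
  ultimately have x_in: "x \<in> P_values W 1"
    unfolding x_def using assms by (intro mixture_in_P_values_1) auto
  have "\<alpha> k \<le> \<nu> (\<lambda>_. k)" for k using nonneg by (simp add: \<nu>_def fun_eq_iff)
  hence "(\<Sum>j\<in>UNIV. \<alpha> j) \<le> x" unfolding x_def by (rule sum_mono)
  moreover have "x \<le> (\<Sum>j\<in>UNIV. \<alpha> j)"
    using P_values_1_le_sum_column_min[OF x_in] by (simp add: \<alpha>_def)
  ultimately show ?thesis using x_in by (simp add: \<alpha>_def)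
qed

lemma scaled_channel_column_le:
  fixes W :: "'m::finite \<Rightarrow> 'n::finite \<Rightarrow> real"
  assumes "scaled_channel W s"
  shows "(\<Sum>i\<in>UNIV. W i j) \<le> W i0 j + (real CARD('m) - 1) * s"
proof -
  have "(\<Sum>i\<in>UNIV. W i j) = W i0 j + (\<Sum>i\<in>UNIV - {i0}. W i j)" by (simp add: sum.remove)
  also have "(\<Sum>i\<in>UNIV - {i0}. W i j) \<le> of_nat (card (UNIV - {i0})) * s"
    using scaled_channel_entry_le[OF assms] by (intro sum_bounded_above) auto
  also have "card (UNIV - {i0}) = CARD('m) - 1" by (simp add: card_Diff_singleton)
  finally show ?thesis by (simp add: of_nat_diff Suc_le_eq)
qed

text \<open>Peeling T off the constant map onto a column js of maximal sum g leaves that column at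
  exactly (m - 1)(1 - T); the other columns have room since they share the remaining mass m - g.\<close>

lemma column_bounded_peel_max_column:
  fixes W :: "'m::finite \<Rightarrow> 'n::finite \<Rightarrow> real"
  assumes m: "2 \<le> CARD('m)" and W: "scaled_channel W 1"
    and max: "\<forall>j. (\<Sum>i\<in>UNIV. W i j) \<le> (\<Sum>i\<in>UNIV. W i js)"
  defines "T \<equiv> max ((\<Sum>i\<in>UNIV. W i js) - real CARD('m) + 1) 0"
  shows "column_bounded (peel T (\<lambda>_. js) W) (1 - T)"
  unfolding column_bounded_def sum_peel_column
proof
  fix j
  define c where "c j = (\<Sum>i\<in>UNIV. W i j)" for j
  show "(\<Sum>i\<in>UNIV. W i j) - T * real (card {i::'m. js = j}) \<le> (real CARD('m) - 1) * (1 - T)"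
  proof (cases "j = js")
    case True
    have "c js - real CARD('m) + 1 \<le> T" by (simp add: T_def c_def)
    hence "c js - T * real CARD('m) \<le> (real CARD('m) - 1) * (1 - T)" by (simp add: algebra_simps)
    thus ?thesis using True by (simp add: c_def)
  next
    case False
    have "(\<Sum>k\<in>{js, j}. c k) \<le> (\<Sum>k\<in>UNIV. c k)"
      using W by (intro sum_mono2) (auto simp: c_def scaled_channel_def sum_nonneg)
    hence pair: "c js + c j \<le> real CARD('m)" using scaled_channel_total[OF W] False by (simp add: c_def)
    have "c j \<le> (real CARD('m) - 1) * (1 - T)"
    proof (cases "c js - real CARD('m) + 1 \<le> 0")
      case True
      thus ?thesis using max[rule_format, of j] by (simp add: T_def c_def)
    next
      case False
      hence T: "1 - T = real CARD('m) - c js" by (simp add: T_def c_def)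
      have "0 \<le> c j" using W by (simp add: c_def scaled_channel_def sum_nonneg)
      moreover have "2 \<le> real CARD('m)" using m by simp
      ultimately have "1 * (1 - T) \<le> (real CARD('m) - 1) * (1 - T)"
        using pair T by (intro mult_right_mono) auto
      thus ?thesis using pair T by simp
    qed
    thus ?thesis using False by (simp add: c_def)
  qed
qed

lemma column_excess_in_P_values_1:
  fixes W :: "real^'n::finite^'m::finite"
  assumes m: "2 \<le> CARD('m)" and "channel W"
  shows "max (Max (range (\<lambda>j. \<Sum>i\<in>UNIV. W $ i $ j)) - real CARD('m) + 1) 0 \<in> P_values W 1"
proof -
  define c where "c j = (\<Sum>i\<in>UNIV. W $ i $ j)" for j
  have "Max (range c) \<in> range c" by (rule Max_in) auto
  then obtain js where js: "Max (range c) = c js" by blast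
  define T where "T = max (c js - real CARD('m) + 1) 0"
  define W' where "W' = peel T (\<lambda>_. js) (\<lambda>i j. W $ i $ j)"
  have W: "scaled_channel (\<lambda>i j. W $ i $ j) 1" using assms(2) by (rule channel_scaled_channel)
  have "T \<le> W $ i $ js" for i
    using scaled_channel_column_le[OF W, of js i] W by (auto simp: T_def c_def scaled_channel_def)
  hence "scaled_channel W' (1 - T)"
    unfolding W'_def using W by (intro scaled_channel_peel) auto
  moreover have "\<forall>j. c j \<le> c js" using js[symmetric] by simp
  hence "column_bounded W' (1 - T)"
    using m W unfolding W'_def T_def c_def by (intro column_bounded_peel_max_column)
  ultimately obtain \<mu> where nonneg: "\<forall>f. 0 \<le> \<mu> f" and nonconst: "\<forall>k. \<mu> (\<lambda>_. k) = 0"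
    and W': "W' = mixture \<mu>"
    using mixture_nonconstant_exists[OF m] by blast
  define \<nu> where "\<nu> = (\<lambda>f. \<mu> f + T * of_bool (f = (\<lambda>_. js)))"
  have "(\<lambda>i j. W $ i $ j) = mixture \<nu>"
    unfolding \<nu>_def using W' unfolding W'_def by (rule mixture_unpeel)
  hence "\<forall>i j. W $ i $ j = mixture \<nu> i j" by (simp add: fun_eq_iff)
  moreover have "\<forall>f. 0 \<le> \<nu> f" using nonneg by (simp add: \<nu>_def T_def)
  ultimately have "(\<Sum>k\<in>UNIV. \<nu> (\<lambda>_. k)) \<in> P_values W 1"
    using assms(2) by (intro mixture_in_P_values_1)
  moreover have "\<nu> (\<lambda>_. k) = T * of_bool (k = js)" for k
    using nonconst by (simp add: \<nu>_def fun_eq_iff)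
  moreover have "max (Max (range (\<lambda>j. \<Sum>i\<in>UNIV. W $ i $ j)) - real CARD('m) + 1) 0 = T"
    using js by (simp add: T_def c_def[abs_def])
  ultimately show ?thesis by simp
qed

theorem proposition7:
  fixes W :: "real^'n^'m"
  assumes "CARD('m) \<ge> 2" and "CARD('n) \<ge> 2"
    and "channel W"
  shows "is_min (P_values W 1)
           (max (Max (range (\<lambda>j. \<Sum>i\<in>UNIV. W $ i $ j)) - real CARD('m) + 1) 0)
       \<and> is_max (P_values W 1) (\<Sum>j\<in>UNIV. Min (range (\<lambda>i. W $ i $ j)))"
  unfolding is_min_def is_max_def
  using column_excess_in_P_values_1[OF assms(1,3)] column_excess_le_P_values_1[OF assms(3)]
    sum_column_min_in_P_values_1[OF assms(3)] P_values_1_le_sum_column_min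
  by blast

end
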